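(* Let $\mathcal{Q}\subseteq\Delta_{N\times M}$ be a nonempty compact convex set consisting only of weakly symmetric channels. Then the robust capacity equals $$\sup_{p\in\Delta_N}\inf_{Q\in\mathcal{Q}}I(p,Q)=\min_{Q\in\mathcal{Q}}\left[\log N+\sum_{m=1}^M Q_{1m}\log\frac{Q_{1m}}{\sum_{l=1}^N Q_{lm}}\right],$$ i.e. the upper bound $\min_{Q\in\mathcal{Q}}\left[\log N+\max_{n}\sum_{m} Q_{nm}\log\frac{Q_{nm}}{\sum_{l} Q_{lm}}\right]$ is attained.
   Context: $\Delta_N$ is the probability simplex in $\mathbb{R}^N$; $\Delta_{N\times M}$ is the set of $N\times M$ nonnegative matrices with each row summing to $1$. $I(p,Q)=\sum_{n,m}p_nQ_{nm}\log\frac{Q_{nm}}{\sum_l p_lQ_{lm}}$, with terms where $p_nQ_{nm}=0$ equal to zero and $0\log 0=0$. A channel $Q\in\Delta_{N\times M}$ is weakly symmetric if every row of $Q$ is a permutation of every other row and all column sums $\sum_{l=1}^N Q_{lm}$, $m=1,\dots,M$, are equal (hence equal to $N/M$). *)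

theory Defs
  imports "HOL-Analysis.Analysis"
begin

text \<open>Indices are 0-based: rows 0..N-1, columns 0..M-1. Vectors/matrices are
  represented as functions that vanish outside the index range (extensional), so
  that the product topology on nat \<Rightarrow> nat \<Rightarrow> real restricted to
  channels is the Euclidean topology of R^(N x M).\<close>

definition prob_simplex :: "nat \<Rightarrow> (nat \<Rightarrow> real) set" where
  "prob_simplex N = {p. (\<forall>n<N. 0 \<le> p n) \<and> (\<forall>n\<ge>N. p n = 0) \<and> (\<Sum>n<N. p n) = 1}"

definition channels :: "nat \<Rightarrow> nat \<Rightarrow> (nat \<Rightarrow> nat \<Rightarrow> real) set" where
  "channels N M = {Q. (\<forall>n<N. \<forall>m<M. 0 \<le> Q n m)
      \<and> (\<forall>n m. (n \<ge> N \<or> m \<ge> M) \<longrightarrow> Q n m = 0)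
      \<and> (\<forall>n<N. (\<Sum>m<M. Q n m) = 1)}"

definition mutual_info :: "nat \<Rightarrow> nat \<Rightarrow> (nat \<Rightarrow> real) \<Rightarrow> (nat \<Rightarrow> nat \<Rightarrow> real) \<Rightarrow> real" where
  "mutual_info N M p Q = (\<Sum>n<N. \<Sum>m<M.
      (if p n * Q n m = 0 then 0
       else p n * Q n m * ln (Q n m / (\<Sum>l<N. p l * Q l m))))"

definition col_sum :: "nat \<Rightarrow> (nat \<Rightarrow> nat \<Rightarrow> real) \<Rightarrow> nat \<Rightarrow> real" where
  "col_sum N Q m = (\<Sum>l<N. Q l m)"

definition weakly_symmetric :: "nat \<Rightarrow> nat \<Rightarrow> (nat \<Rightarrow> nat \<Rightarrow> real) \<Rightarrow> bool" where
  "weakly_symmetric N M Q \<longleftrightarrow>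
     (\<forall>n<N. \<forall>n'<N. \<exists>\<sigma>. \<sigma> permutes {..<M} \<and> (\<forall>m<M. Q n' m = Q n (\<sigma> m)))
     \<and> (\<forall>m<M. \<forall>m'<M. col_sum N Q m = col_sum N Q m')"

definition convex_chan_set :: "(nat \<Rightarrow> nat \<Rightarrow> real) set \<Rightarrow> bool" where
  "convex_chan_set S \<longleftrightarrow> (\<forall>Q1\<in>S. \<forall>Q2\<in>S. \<forall>t::real. 0 \<le> t \<and> t \<le> 1 \<longrightarrow>
      (\<lambda>n m. t * Q1 n m + (1 - t) * Q2 n m) \<in> S)"

text \<open>The bracketed quantity, evaluated on the first row (index 0), with 0 log 0 = 0.\<close>
definition sym_value :: "nat \<Rightarrow> nat \<Rightarrow> (nat \<Rightarrow> nat \<Rightarrow> real) \<Rightarrow> real" where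
  "sym_value N M Q = ln (real N) + (\<Sum>m<M.
      (if Q 0 m = 0 then 0 else Q 0 m * ln (Q 0 m / col_sum N Q m)))"

end

theory Submission
  imports Defs "HOL-Real_Asymp.Real_Asymp"
begin

text \<open>For a weakly symmetric channel every row has the same entropy, so
  \<open>I(p,Q) = H(pQ) - H(Q\<^sub>0)\<close>, where \<open>Q\<^sub>0\<close> is the first row.  Hence
  \<open>I(p,Q) \<le> log M - H(Q\<^sub>0)\<close>, which equals the bracketed quantity because all
  column sums are \<open>N/M\<close>; equality holds for the uniform input, whose output
  distribution is uniform since the columns have equal sums.  So the uniform input
  is optimal against every channel simultaneously, and the robust capacity is the
  minimum over \<open>\<Q>\<close> of the bracket, which exists by compactness.\<close>

definition output_dist :: "nat \<Rightarrow> (nat \<Rightarrow> real) \<Rightarrow> (nat \<Rightarrow> nat \<Rightarrow> real) \<Rightarrow> nat \<Rightarrow> real" where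
  "output_dist N p Q m = (\<Sum>l<N. p l * Q l m)"

definition uniform_dist :: "nat \<Rightarrow> nat \<Rightarrow> real" where
  "uniform_dist N n = (if n < N then 1 / real N else 0)"

lemma continuous_on_x_ln_x: "continuous_on {0..} (\<lambda>x::real. x * ln x)"
proof -
  have "continuous (at x within {0..}) (\<lambda>x::real. x * ln x)" if "x \<ge> 0" for x
  proof (cases "x = 0")
    case True
    have "((\<lambda>x::real. x * ln x) \<longlongrightarrow> 0) (at_right 0)" by real_asymp
    then show ?thesis
      using True by (simp add: continuous_within at_within_Ici_at_right)
  next
    case False
    then have "isCont (\<lambda>x::real. x * ln x) x"
      using that by (intro continuous_intros) auto
    then show ?thesis by (rule continuous_at_imp_continuous_at_within)
  qed
  then show ?thesis by (simp add: continuous_on_eq_continuous_within)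
qed

lemma continuous_on_matrix_entry: "continuous_on S (\<lambda>Q::'a \<Rightarrow> 'b \<Rightarrow> real. Q i j)"
  by (rule continuous_on_product_then_coordinatewise
      [OF continuous_on_product_then_coordinatewise, OF continuous_on_id])

lemma sum_mult_ln_ge_neg_ln_card:
  fixes q :: "'a \<Rightarrow> real"
  assumes "finite A" "A \<noteq> {}" "\<forall>a\<in>A. 0 \<le> q a" "sum q A = 1"
  shows "- ln (real (card A)) \<le> (\<Sum>a\<in>A. q a * ln (q a))"
proof -
  define c where "c = real (card A)"
  have c: "c > 0" using assms(1,2) by (simp add: c_def card_gt_0_iff)
  \<comment> \<open>\<open>ln x \<le> x - 1\<close> at \<open>x = 1/(c q)\<close>, multiplied by \<open>q\<close>\<close>
  have term_le: "- q a * ln c - q a * ln (q a) \<le> 1 / c - q a" if "a \<in> A" for a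
  proof (cases "q a = 0")
    case False
    then have q: "q a > 0" using assms(3) that by force
    have "ln (1 / (c * q a)) \<le> 1 / (c * q a) - 1"
      using q c by (intro ln_le_minus_one) simp
    then have "q a * (- ln c - ln (q a)) \<le> q a * (1 / (c * q a) - 1)"
      using q c by (intro mult_left_mono) (simp_all add: ln_div ln_mult)
    then show ?thesis using q by (simp add: algebra_simps)
  qed (use c in simp)
  have "(\<Sum>a\<in>A. - q a * ln c - q a * ln (q a)) \<le> (\<Sum>a\<in>A. 1 / c - q a)"
    by (rule sum_mono) (rule term_le)
  also have "\<dots> = 0" using assms(4) c by (simp add: sum_subtractf c_def)
  finally show ?thesis
    using assms(4) by (simp add: c_def sum_subtractf sum_negf flip: sum_distrib_right)
qed

lemma
  assumes "p \<in> prob_simplex N" and "Q \<in> channels N M"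
  shows output_dist_nonneg: "m < M \<Longrightarrow> 0 \<le> output_dist N p Q m"
    and output_dist_le_1: "m < M \<Longrightarrow> output_dist N p Q m \<le> 1"
    and sum_output_dist: "(\<Sum>m<M. output_dist N p Q m) = 1"
proof -
  have p: "\<forall>n<N. 0 \<le> p n" "(\<Sum>n<N. p n) = 1" using assms(1) by (auto simp: prob_simplex_def)
  have Q: "\<forall>n<N. \<forall>m<M. 0 \<le> Q n m" "\<forall>n<N. (\<Sum>m<M. Q n m) = 1"
    using assms(2) by (auto simp: channels_def)
  show "0 \<le> output_dist N p Q m" if "m < M"
    using p Q that unfolding output_dist_def by (intro sum_nonneg) auto
  show "output_dist N p Q m \<le> 1" if "m < M"
  proof -
    have "Q l m \<le> 1" if "l < N" for l
      using member_le_sum[of m "{..<M}" "Q l"] Q that \<open>m < M\<close> by auto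
    then have "output_dist N p Q m \<le> (\<Sum>l<N. p l * 1)"
      unfolding output_dist_def using p by (intro sum_mono mult_left_mono) auto
    then show ?thesis using p by simp
  qed
  have "(\<Sum>m<M. output_dist N p Q m) = (\<Sum>l<N. p l * (\<Sum>m<M. Q l m))"
    unfolding output_dist_def by (subst sum.swap) (simp add: sum_distrib_left)
  then show "(\<Sum>m<M. output_dist N p Q m) = 1" using p Q by simp
qed

lemma mutual_info_eq_entropy_diff:
  assumes p: "p \<in> prob_simplex N" and Q: "Q \<in> channels N M"
  shows "mutual_info N M p Q = (\<Sum>n<N. p n * (\<Sum>m<M. Q n m * ln (Q n m)))
           - (\<Sum>m<M. output_dist N p Q m * ln (output_dist N p Q m))"
proof -
  let ?q = "output_dist N p Q"
  have p_nonneg: "\<forall>n<N. 0 \<le> p n" using p by (simp add: prob_simplex_def)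
  have Q_nonneg: "\<forall>n<N. \<forall>m<M. 0 \<le> Q n m" using Q by (simp add: channels_def)
  have term_eq: "(if p n * Q n m = 0 then 0 else p n * Q n m * ln (Q n m / ?q m))
      = p n * (Q n m * ln (Q n m)) - p n * Q n m * ln (?q m)" if "n < N" "m < M" for n m
  proof (cases "p n * Q n m = 0")
    case False
    then have "p n \<noteq> 0" "Q n m \<noteq> 0" by auto
    then have pos: "p n > 0" "Q n m > 0" using p_nonneg Q_nonneg that by (simp_all add: less_le)
    have "p n * Q n m \<le> ?q m"
      unfolding output_dist_def using p_nonneg Q_nonneg that
      by (intro member_le_sum[where f = "\<lambda>l. p l * Q l m"]) auto
    then have "?q m > 0" using mult_pos_pos[OF pos] by linarith
    then show ?thesis using pos by (simp add: ln_div algebra_simps)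
  qed auto
  have "mutual_info N M p Q
      = (\<Sum>n<N. \<Sum>m<M. p n * (Q n m * ln (Q n m)) - p n * Q n m * ln (?q m))"
    unfolding mutual_info_def output_dist_def[symmetric] by (intro sum.cong refl term_eq) auto
  also have "\<dots> = (\<Sum>n<N. p n * (\<Sum>m<M. Q n m * ln (Q n m)))
      - (\<Sum>n<N. \<Sum>m<M. p n * Q n m * ln (?q m))"
    by (simp add: sum_subtractf sum_distrib_left)
  also have "(\<Sum>n<N. \<Sum>m<M. p n * Q n m * ln (?q m)) = (\<Sum>m<M. ?q m * ln (?q m))"
    unfolding output_dist_def by (subst sum.swap) (simp add: sum_distrib_right)
  finally show ?thesis .
qed

lemma weakly_symmetric_sum_row_eq:
  assumes "weakly_symmetric N M Q" "n < N" "n' < N"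
  shows "(\<Sum>m<M. f (Q n' m)) = (\<Sum>m<M. f (Q n m))"
proof -
  obtain \<sigma> where \<sigma>: "\<sigma> permutes {..<M}" "\<forall>m<M. Q n' m = Q n (\<sigma> m)"
    using assms unfolding weakly_symmetric_def by blast
  have "(\<Sum>m<M. f (Q n' m)) = (\<Sum>m<M. ((\<lambda>m. f (Q n m)) \<circ> \<sigma>) m)"
    using \<sigma>(2) by (intro sum.cong) auto
  also have "\<dots> = (\<Sum>m<M. f (Q n m))" by (rule sum.permute[OF \<sigma>(1), symmetric])
  finally show ?thesis .
qed

lemma weakly_symmetric_col_sum:
  assumes "Q \<in> channels N M" "weakly_symmetric N M Q" "m < M"
  shows "col_sum N Q m = real N / real M"
proof -
  have "(\<Sum>m'<M. col_sum N Q m') = (\<Sum>l<N. \<Sum>m'<M. Q l m')"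
    unfolding col_sum_def by (rule sum.swap)
  also have "\<dots> = real N" using assms(1) by (simp add: channels_def)
  finally have "(\<Sum>m'<M. col_sum N Q m') = real N" .
  moreover have "\<forall>m'<M. col_sum N Q m' = col_sum N Q m"
    using assms(2,3) unfolding weakly_symmetric_def by blast
  then have "(\<Sum>m'<M. col_sum N Q m') = real M * col_sum N Q m"
    by simp
  ultimately show ?thesis using assms(3) by (simp add: field_simps)
qed

lemma sym_value_weakly_symmetric:
  assumes Q: "Q \<in> channels N M" and ws: "weakly_symmetric N M Q" and "0 < N"
  shows "sym_value N M Q = ln (real M) + (\<Sum>m<M. Q 0 m * ln (Q 0 m))"
proof -
  have Q0: "\<forall>m<M. 0 \<le> Q 0 m" "(\<Sum>m<M. Q 0 m) = 1"
    using Q \<open>0 < N\<close> by (simp_all add: channels_def)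
  then have "0 < M" by (cases M) auto
  have term_eq: "(if Q 0 m = 0 then 0 else Q 0 m * ln (Q 0 m / col_sum N Q m))
      = Q 0 m * ln (Q 0 m) - Q 0 m * ln (real N / real M)" if "m < M" for m
  proof (cases "Q 0 m = 0")
    case False
    then have "Q 0 m > 0" using Q0 that by force
    moreover have "real N / real M > 0" using \<open>0 < N\<close> \<open>0 < M\<close> by simp
    ultimately show ?thesis
      unfolding weakly_symmetric_col_sum[OF Q ws that]
      by (simp only: ln_divide_pos if_False False right_diff_distrib)
  qed simp
  have "sym_value N M Q
      = ln (real N) + (\<Sum>m<M. Q 0 m * ln (Q 0 m) - Q 0 m * ln (real N / real M))"
    unfolding sym_value_def by (intro arg_cong2[where f = "(+)"] refl sum.cong term_eq) auto
  also have "\<dots> = ln (real N) + (\<Sum>m<M. Q 0 m * ln (Q 0 m)) - ln (real N / real M)"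
    using Q0 by (simp add: sum_subtractf flip: sum_distrib_right)
  also have "\<dots> = ln (real M) + (\<Sum>m<M. Q 0 m * ln (Q 0 m))"
    using \<open>0 < N\<close> \<open>0 < M\<close> by (simp add: ln_div)
  finally show ?thesis .
qed

lemma mutual_info_weakly_symmetric:
  assumes p: "p \<in> prob_simplex N" and Q: "Q \<in> channels N M"
    and ws: "weakly_symmetric N M Q" and "0 < N"
  shows "mutual_info N M p Q = (\<Sum>m<M. Q 0 m * ln (Q 0 m))
           - (\<Sum>m<M. output_dist N p Q m * ln (output_dist N p Q m))"
proof -
  have "(\<Sum>n<N. p n * (\<Sum>m<M. Q n m * ln (Q n m)))
      = (\<Sum>n<N. p n * (\<Sum>m<M. Q 0 m * ln (Q 0 m)))"
  proof (rule sum.cong)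
    show "p n * (\<Sum>m<M. Q n m * ln (Q n m)) = p n * (\<Sum>m<M. Q 0 m * ln (Q 0 m))"
      if "n \<in> {..<N}" for n
      using weakly_symmetric_sum_row_eq[OF ws \<open>0 < N\<close>, of n "\<lambda>x. x * ln x"] that by simp
  qed simp
  also have "\<dots> = (\<Sum>m<M. Q 0 m * ln (Q 0 m))"
    using p by (simp add: prob_simplex_def flip: sum_distrib_right)
  finally show ?thesis using mutual_info_eq_entropy_diff[OF p Q] by simp
qed

lemma mutual_info_le_sym_value:
  assumes "p \<in> prob_simplex N" "Q \<in> channels N M" "weakly_symmetric N M Q" "0 < N" "0 < M"
  shows "mutual_info N M p Q \<le> sym_value N M Q"
proof -
  have "- ln (real M) \<le> (\<Sum>m<M. output_dist N p Q m * ln (output_dist N p Q m))"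
    using sum_mult_ln_ge_neg_ln_card[of "{..<M}" "output_dist N p Q"] \<open>0 < M\<close>
      output_dist_nonneg[OF assms(1,2)] sum_output_dist[OF assms(1,2)] by auto
  then show ?thesis
    using mutual_info_weakly_symmetric[OF assms(1-4)] sym_value_weakly_symmetric[OF assms(2-4)]
    by simp
qed

lemma neg_ln_le_mutual_info:
  assumes p: "p \<in> prob_simplex N" and Q: "Q \<in> channels N M"
    and ws: "weakly_symmetric N M Q" and "0 < N" "0 < M"
  shows "- ln (real M) \<le> mutual_info N M p Q"
proof -
  have "- ln (real M) \<le> (\<Sum>m<M. Q 0 m * ln (Q 0 m))"
    using sum_mult_ln_ge_neg_ln_card[of "{..<M}" "Q 0"] Q \<open>0 < N\<close> \<open>0 < M\<close>
    by (auto simp: channels_def)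
  moreover have "output_dist N p Q m * ln (output_dist N p Q m) \<le> 0" if "m < M" for m
    using output_dist_nonneg[OF p Q that] output_dist_le_1[OF p Q that]
    by (cases "output_dist N p Q m = 0") (auto intro: mult_nonneg_nonpos)
  then have "(\<Sum>m<M. output_dist N p Q m * ln (output_dist N p Q m)) \<le> 0"
    by (intro sum_nonpos) auto
  ultimately show ?thesis using mutual_info_weakly_symmetric[OF p Q ws \<open>0 < N\<close>] by simp
qed

lemma uniform_dist_in_prob_simplex: "0 < N \<Longrightarrow> uniform_dist N \<in> prob_simplex N"
  by (simp add: prob_simplex_def uniform_dist_def)

lemma mutual_info_uniform_dist:
  assumes Q: "Q \<in> channels N M" and ws: "weakly_symmetric N M Q" and "0 < N" "0 < M"
  shows "mutual_info N M (uniform_dist N) Q = sym_value N M Q"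
proof -
  let ?q = "output_dist N (uniform_dist N) Q"
  have "?q m = 1 / real M" if "m < M" for m
  proof -
    have "?q m = col_sum N Q m / real N"
      by (simp add: output_dist_def uniform_dist_def col_sum_def sum_divide_distrib)
    then show ?thesis
      unfolding weakly_symmetric_col_sum[OF Q ws that] using \<open>0 < N\<close> by simp
  qed
  then have "(\<Sum>m<M. ?q m * ln (?q m)) = - ln (real M)"
    using \<open>0 < M\<close> by (simp add: ln_div)
  then show ?thesis
    using mutual_info_weakly_symmetric[OF uniform_dist_in_prob_simplex Q ws] assms
      sym_value_weakly_symmetric[OF Q ws] by simp
qed

lemma sym_value_attains_min:
  assumes "compact \<Q>" "\<Q> \<noteq> {}" "\<Q> \<subseteq> channels N M" "\<forall>Q\<in>\<Q>. weakly_symmetric N M Q" "0 < N"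
  obtains Q0 where "Q0 \<in> \<Q>" "\<forall>Q\<in>\<Q>. sym_value N M Q0 \<le> sym_value N M Q"
proof -
  let ?g = "\<lambda>Q::nat \<Rightarrow> nat \<Rightarrow> real. ln (real M) + (\<Sum>m<M. Q 0 m * ln (Q 0 m))"
  have "Q 0 m \<ge> 0" if "Q \<in> \<Q>" for Q m
    using assms(3,5) that by (cases "m < M") (auto simp: channels_def)
  then have "continuous_on \<Q> (\<lambda>Q. Q 0 m * ln (Q 0 m))" for m
    by (intro continuous_on_compose2[OF continuous_on_x_ln_x continuous_on_matrix_entry]) auto
  then have "continuous_on \<Q> ?g"
    by (intro continuous_on_add continuous_on_const continuous_on_sum)
  then obtain Q0 where "Q0 \<in> \<Q>" "\<forall>Q\<in>\<Q>. ?g Q0 \<le> ?g Q"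
    using continuous_attains_inf[OF assms(1,2)] by blast
  moreover have "sym_value N M Q = ?g Q" if "Q \<in> \<Q>" for Q
    using sym_value_weakly_symmetric assms(3-5) that by blast
  ultimately show thesis using that by simp
qed

theorem proposition3:
  fixes N M :: nat and \<Q> :: "(nat \<Rightarrow> nat \<Rightarrow> real) set"
  assumes "0 < N" and "0 < M"
    and "\<Q> \<noteq> {}" and "\<Q> \<subseteq> channels N M"
    and "compact \<Q>" and "convex_chan_set \<Q>"
    and "\<forall>Q\<in>\<Q>. weakly_symmetric N M Q"
  shows "\<exists>Q0\<in>\<Q>. (\<forall>Q\<in>\<Q>. sym_value N M Q0 \<le> sym_value N M Q)
           \<and> (SUP p\<in>prob_simplex N. INF Q\<in>\<Q>. mutual_info N M p Q) = sym_value N M Q0"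
proof -
  obtain Q0 where Q0: "Q0 \<in> \<Q>" and min: "\<forall>Q\<in>\<Q>. sym_value N M Q0 \<le> sym_value N M Q"
    using sym_value_attains_min[OF assms(5,3,4,7,1)] by blast
  define F where "F p = (INF Q\<in>\<Q>. mutual_info N M p Q)" for p
  have F_le: "F p \<le> sym_value N M Q0" if p: "p \<in> prob_simplex N" for p
  proof -
    \<comment> \<open>on \<open>real\<close>, \<open>INF\<close> of a set unbounded below is unspecified\<close>
    have "bdd_below ((\<lambda>Q. mutual_info N M p Q) ` \<Q>)"
      using neg_ln_le_mutual_info[OF p] assms(1,2,4,7) by (intro bdd_belowI2) auto
    then have "F p \<le> mutual_info N M p Q0" unfolding F_def using Q0 by (rule cINF_lower)
    also have "\<dots> \<le> sym_value N M Q0"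
      using mutual_info_le_sym_value[OF p] Q0 assms(1,2,4,7) by auto
    finally show ?thesis .
  qed
  have uniform: "uniform_dist N \<in> prob_simplex N"
    using assms(1) by (rule uniform_dist_in_prob_simplex)
  have "sym_value N M Q0 \<le> F (uniform_dist N)"
    unfolding F_def using min mutual_info_uniform_dist assms(1-4,7)
    by (intro cINF_greatest) auto
  then have "sym_value N M Q0 \<le> (SUP p\<in>prob_simplex N. F p)"
    using uniform F_le by (intro cSUP_upper2 bdd_aboveI2) auto
  moreover have "(SUP p\<in>prob_simplex N. F p) \<le> sym_value N M Q0"
    using uniform F_le by (intro cSUP_least) auto
  ultimately show ?thesis using Q0 min unfolding F_def by auto
qed

end
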